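(* In the setting below, let $\mathbf{L}^+$ and $\mathbf{L}^-$ be two parabolic Higgs line bundles over $\mathbb{C}\mathbb{P}^1$ which are trivial as holomorphic line bundles, with discrete data $S$ and $S^c$ respectively. Then any extension $0\to\mathbf{L}^+\to\mathbf{E}\to\mathbf{L}^-\to0$ of PHBs is $\Delta^+$-unstable, and it is $\Delta^-$-stable if and only if it is not split.
   Context: Fix distinct $x_1,\dots,x_n\in\mathbb{C}\mathbb{P}^1$. Weights $\beta=(\beta_1(x_i),\beta_2(x_i))_i$ with $0\le\beta_1(x_i)<\beta_2(x_i)<1$ form the weight space $Q$; $\varepsilon_T(\alpha)=\sum_{i\in T}\alpha_i-\sum_{i\notin T}\alpha_i$ for $\alpha=\beta_2-\beta_1$. Walls: intersections of $Q$ with hyperplanes $\varepsilon_T(\beta_2-\beta_1)=0$; chambers: components of the complement. PHBs are rank-2 parabolic Higgs bundles $(E,\Phi)$ over $\mathbb{C}\mathbb{P}^1$, trivial as holomorphic bundles, with fixed determinant and trace-free Higgs field ($E$ has a line $E_{x_i,2}\subset E_{x_i}$ at each $x_i$ with weights $\beta_1(x_i)<\beta_2(x_i)$; $\Phi$ a meromorphic $\mathrm{End}_0(E)\otimes K_{\mathbb{C}\mathbb{P}^1}$-valued section with at most simple poles at the $x_i$, residues mapping $E_{x_i}$ into $E_{x_i,2}$ and killing $E_{x_i,2}$). A parabolic Higgs line bundle has at each $x_i$ a weight equal to $\beta_1(x_i)$ or $\beta_2(x_i)$; its discrete data is the set of $i$ with weight $\beta_2(x_i)$ (for a subbundle $L\subset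 E$ this is $\{i:L_{x_i}=E_{x_i,2}\}$; the quotient gets the complementary weights). $(E,\Phi)$ is $\beta$-stable iff every $\Phi$-invariant line subbundle $L$ with discrete data $S_L$ has $\varepsilon_{S_L}(\beta_2-\beta_1)<0$. Fix a point of $Q$ on exactly one wall $W$ with adjacent chambers $\Delta^\pm$, and let $S$ be the index set of $W$ normalized so that $\varepsilon_S(\beta_2-\beta_1)>0$ on $\Delta^+$; $\Delta^\pm$-stable means stable for weights in $\Delta^\pm$. *)

theory Defs
  imports "HOL-Analysis.Analysis"
begin

text \<open>Marked points are indexed by a finite type 'n (so n = CARD('n)).
Since every PHB is holomorphically trivial, E = C^2 x CP^1; a fibre line
E_{x_i,2} is a complex line in C^2.  A trace-free Higgs field on the trivial
bundle with at most simple poles at the x_i is determined by its residues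
A_i in sl_2(C), subject only to the residue theorem: sum of the A_i is 0.\<close>

type_synonym vec2 = "complex^2"
type_synonym mat2 = "complex^2^2"

definition cline :: "vec2 \<Rightarrow> vec2 set" where
  "cline v = {c *s v | c. True}"

definition is_line :: "vec2 set \<Rightarrow> bool" where
  "is_line L \<longleftrightarrow> (\<exists>v. v \<noteq> 0 \<and> L = cline v)"

record 'n phb =
  flag  :: "'n \<Rightarrow> vec2 set"   (* E_{x_i,2}, the line with the larger weight *)
  resid :: "'n \<Rightarrow> mat2"

definition is_PHB :: "'n::finite phb \<Rightarrow> bool" where
  "is_PHB E \<longleftrightarrow>
     (\<forall>i. is_line (flag E i)
        \<and> trace (resid E i) = 0
        \<and> (\<forall>v. resid E i *v v \<in> flag E i)
        \<and> (\<forall>v\<in>flag E i. resid E i *v v = 0))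
     \<and> (\<Sum>i\<in>UNIV. resid E i) = 0"

text \<open>Line subbundles of the trivial bundle of degree 0 are constant lines L;
L is Phi-invariant iff every residue preserves L.\<close>
definition invariant :: "'n::finite phb \<Rightarrow> vec2 set \<Rightarrow> bool" where
  "invariant E L \<longleftrightarrow> (\<forall>i. \<forall>v\<in>L. resid E i *v v \<in> L)"

definition disc :: "'n::finite phb \<Rightarrow> vec2 set \<Rightarrow> 'n set" where
  "disc E L = {i. L = flag E i}"

type_synonym 'n weight = "(real^'n) \<times> (real^'n)"

definition alpha :: "'n::finite weight \<Rightarrow> real^'n" where
  "alpha \<beta> = snd \<beta> - fst \<beta>"

definition eps :: "'n::finite set \<Rightarrow> real^'n \<Rightarrow> real" where
  "eps T a = (\<Sum>i\<in>T. a $ i) - (\<Sum>i\<in>-T. a $ i)"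

definition Q :: "'n::finite weight set" where
  "Q = {\<beta>. \<forall>i. 0 \<le> fst \<beta> $ i \<and> fst \<beta> $ i < snd \<beta> $ i \<and> snd \<beta> $ i < 1}"

definition wall :: "'n::finite set \<Rightarrow> 'n weight set" where
  "wall T = Q \<inter> {\<beta>. eps T (alpha \<beta>) = 0}"

definition chamber :: "'n::finite weight set \<Rightarrow> bool" where
  "chamber D \<longleftrightarrow> (\<exists>p \<in> Q - (\<Union>T. wall T).
       D = connected_component_set (Q - (\<Union>T. wall T)) p)"

definition stable :: "'n::finite weight \<Rightarrow> 'n phb \<Rightarrow> bool" where
  "stable \<beta> E \<longleftrightarrow>
     (\<forall>L. is_line L \<and> invariant E L \<longrightarrow> eps (disc E L) (alpha \<beta>) < 0)"

text \<open>An extension 0 -> L+ -> E -> L- -> 0 with L+, L- trivial of discrete data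
S and -S: a Phi-invariant (degree-0) line subbundle L of E with discrete data S;
the quotient then automatically carries the complementary data -S.\<close>
definition is_extension :: "'n::finite set \<Rightarrow> 'n phb \<Rightarrow> vec2 set \<Rightarrow> bool" where
  "is_extension S E L \<longleftrightarrow> is_PHB E \<and> is_line L \<and> invariant E L \<and> disc E L = S"

text \<open>Split: E is the direct sum of L and a Phi-invariant complement M which,
with the induced structure, is isomorphic to L- (discrete data -S).\<close>
definition split_ext :: "'n::finite set \<Rightarrow> 'n phb \<Rightarrow> vec2 set \<Rightarrow> bool" where
  "split_ext S E L \<longleftrightarrow>
     (\<exists>M. is_line M \<and> M \<inter> L = {0} \<and> invariant E M \<and> disc E M = -S)"

end

theory Submission imports Defs begin

text \<open>The line L has discrete data S, so it destabilizes E exactly where eps S > 0, i.e. on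
\<Delta>+. On \<Delta>-, the invariant lines other than L are the candidates. Their discrete data is
disjoint from S; if it is all of -S the line is a splitting, and it destabilizes E on \<Delta>-.
Otherwise its data is a proper subset of -S, so at the wall point p0 (where eps S = 0 and
all \<alpha>_i > 0) its eps-value is strictly below eps (-S) = 0. Since a chamber meets no wall,
eps T is nonvanishing on it, and a chamber adjacent to p0 inherits the sign at p0.\<close>

lemma cline_eq_of_mem:
  assumes "u \<noteq> 0" "u \<in> cline v"
  shows "cline v = cline u"
proof -
  obtain c where u: "u = c *s v" using assms(2) unfolding cline_def by auto
  with assms(1) have "c \<noteq> 0" by auto
  show ?thesis unfolding cline_def
  proof (intro set_eqI iffI)
    fix x assume "x \<in> {d *s v |d. True}"
    then obtain d where "x = d *s v" by auto
    with u \<open>c \<noteq> 0\<close> have "x = (d / c) *s u" by (simp add: vector_smult_assoc)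
    thus "x \<in> {d *s u |d. True}" by blast
  next
    fix x assume "x \<in> {d *s u |d. True}"
    then obtain d where "x = d *s u" by auto
    with u have "x = (d * c) *s v" by (simp add: vector_smult_assoc)
    thus "x \<in> {d *s v |d. True}" by blast
  qed
qed

lemma is_line_Int_eq_zero:
  assumes "is_line L" "is_line M" "L \<noteq> M"
  shows "L \<inter> M = {0}"
proof -
  obtain v where v: "L = cline v" using assms(1) unfolding is_line_def by blast
  obtain w where w: "M = cline w" using assms(2) unfolding is_line_def by blast
  have "u = 0" if "u \<in> L" "u \<in> M" for u
    using that cline_eq_of_mem[of u v] cline_eq_of_mem[of u w] v w assms(3) by auto
  moreover have "0 \<in> L \<inter> M" using v w unfolding cline_def by (auto intro: exI[of _ 0])
  ultimately show ?thesis by blast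
qed

lemma eps_Compl: "eps (- T) a = - eps T a"
  unfolding eps_def by simp

lemma eps_strict_mono:
  fixes a :: "real^'n::finite"
  assumes "T \<subset> U" "\<And>i. a $ i > 0"
  shows "eps T a < eps U a"
proof -
  obtain j where j: "j \<in> U - T" using assms(1) by blast
  have "(\<Sum>i\<in>U - T. a $ i) > 0"
    using j assms(2) by (intro sum_pos2[of _ j]) (auto simp: less_imp_le)
  hence "(\<Sum>i\<in>T. a $ i) < (\<Sum>i\<in>U. a $ i)"
    using assms(1) by (simp add: sum.subset_diff[of T U])
  moreover have "(\<Sum>i\<in>-T. a $ i) > (\<Sum>i\<in>-U. a $ i)"
    using \<open>(\<Sum>i\<in>U - T. a $ i) > 0\<close> assms(1)
    by (simp add: sum.subset_diff[of "-U" "-T"] Diff_Compl double_compl Int_commute Diff_eq)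
  ultimately show ?thesis unfolding eps_def by simp
qed

lemma connected_nonvanishing_neg_of_closure:
  fixes f :: "'a::topological_space \<Rightarrow> real"
  assumes cont: "continuous_on UNIV f" and "connected D" and nz: "\<And>x. x \<in> D \<Longrightarrow> f x \<noteq> 0"
    and p: "p \<in> closure D" "f p < 0"
  shows "\<forall>x\<in>D. f x < 0"
proof (rule ccontr)
  assume "\<not> (\<forall>x\<in>D. f x < 0)"
  then obtain b where b: "b \<in> D" "f b > 0" using nz by (meson linorder_neqE_linordered_idom)
  have conn: "connected (f ` D)"
    using connected_continuous_image[OF continuous_on_subset[OF cont] \<open>connected D\<close>] by simp
  have nonneg: "f x \<ge> 0" if x: "x \<in> D" for x
  proof (rule ccontr)
    assume "\<not> f x \<ge> 0"
    hence "0 \<in> f ` D"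
      using connectedD_interval[OF conn, of "f x" "f b" 0] x b by auto
    with nz show False by auto
  qed
  have "closed {x. 0 \<le> f x}"
    using closed_Collect_le[OF continuous_on_const cont] by simp
  hence "closure D \<subseteq> {x. 0 \<le> f x}" using nonneg by (intro closure_minimal) auto
  with p show False by auto
qed

lemma chamber_nonempty:
  assumes "chamber D"
  shows "D \<noteq> {}"
proof -
  obtain p where p: "p \<in> Q - (\<Union>T. wall T)" and D: "D = connected_component_set (Q - (\<Union>T. wall T)) p"
    using assms unfolding chamber_def by blast
  have "p \<in> D" using p D by (simp add: connected_component_refl)
  thus ?thesis by blast
qed

lemma chamber_eps_nonzero:
  assumes "chamber D" "\<beta> \<in> D"
  shows "eps T (alpha \<beta>) \<noteq> 0"
proof -
  obtain p where "D = connected_component_set (Q - (\<Union>T. wall T)) p"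
    using assms(1) unfolding chamber_def by blast
  with assms(2) have "\<beta> \<in> Q - (\<Union>T. wall T)" using connected_component_subset by blast
  hence "\<beta> \<notin> wall T" by blast
  with \<open>\<beta> \<in> Q - (\<Union>T. wall T)\<close> show ?thesis unfolding wall_def by blast
qed

lemma chamber_eps_neg_of_closure:
  assumes "chamber D" "p \<in> closure D" "eps T (alpha p) < 0"
  shows "\<forall>\<beta>\<in>D. eps T (alpha \<beta>) < 0"
proof (rule connected_nonvanishing_neg_of_closure[where f="\<lambda>\<beta>. eps T (alpha \<beta>)"])
  show "continuous_on UNIV (\<lambda>\<beta>::'a weight. eps T (alpha \<beta>))"
    unfolding eps_def alpha_def by (intro continuous_intros)
  show "connected D" using assms(1) unfolding chamber_def by auto
qed (use assms chamber_eps_nonzero in auto)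

lemma nonsplit_other_line_eps_neg:
  assumes ext: "is_extension S E L" and nonsplit: "\<not> split_ext S E L"
    and L': "is_line L'" "invariant E L'" "L' \<noteq> L"
    and wall: "eps S a = 0" and pos: "\<And>i. a $ i > 0"
  shows "eps (disc E L') a < 0"
proof -
  have "disc E L' \<subseteq> -S"
    using ext L'(3) unfolding is_extension_def disc_def by auto
  moreover have "disc E L' \<noteq> -S"
    using nonsplit L' is_line_Int_eq_zero[of L' L] ext
    unfolding split_ext_def is_extension_def by blast
  ultimately have "eps (disc E L') a < eps (-S) a" using pos by (intro eps_strict_mono) auto
  thus ?thesis using wall by (simp add: eps_Compl)
qed

theorem mainTheorem7:
  fixes p0 :: "'n::finite weight" and S :: "'n set"
    and Dp Dm :: "'n weight set" and E :: "'n phb" and L :: "vec2 set"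
  assumes "p0 \<in> Q"
    and "{W. (\<exists>T. W = wall T) \<and> p0 \<in> W} = {wall S}"
    and "chamber Dp" and "p0 \<in> closure Dp" and "\<forall>\<beta>\<in>Dp. eps S (alpha \<beta>) > 0"
    and "chamber Dm" and "p0 \<in> closure Dm" and "\<forall>\<beta>\<in>Dm. eps S (alpha \<beta>) < 0"
    and "is_extension S E L"
  shows "(\<forall>\<beta>\<in>Dp. \<not> stable \<beta> E) \<and> ((\<forall>\<beta>\<in>Dm. stable \<beta> E) \<longleftrightarrow> \<not> split_ext S E L)"
proof -
  have L: "is_line L" "invariant E L" "disc E L = S"
    using assms(9) unfolding is_extension_def by auto
  have on_wall: "eps S (alpha p0) = 0" using assms(2) unfolding wall_def by blast
  have alpha_pos: "alpha p0 $ i > 0" for i using assms(1) unfolding Q_def alpha_def by auto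
  have unstable_Dp: "\<forall>\<beta>\<in>Dp. \<not> stable \<beta> E"
    using assms(5) L unfolding stable_def by force
  have "\<not> (\<forall>\<beta>\<in>Dm. stable \<beta> E)" if split: "split_ext S E L"
  proof -
    obtain M where M: "is_line M" "invariant E M" "disc E M = -S"
      using split unfolding split_ext_def by blast
    obtain \<beta> where "\<beta> \<in> Dm" using chamber_nonempty[OF assms(6)] by blast
    with M assms(8) show ?thesis unfolding stable_def by (force simp: eps_Compl)
  qed
  moreover have "\<forall>\<beta>\<in>Dm. stable \<beta> E" if nonsplit: "\<not> split_ext S E L"
    unfolding stable_def
  proof (intro ballI allI impI, elim conjE)
    fix \<beta> L' assume \<beta>: "\<beta> \<in> Dm" and L': "is_line L'" "invariant E L'"
    show "eps (disc E L') (alpha \<beta>) < 0"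
    proof (cases "L' = L")
      case True
      with \<beta> L(3) assms(8) show ?thesis by simp
    next
      case False
      with nonsplit L' have "eps (disc E L') (alpha p0) < 0"
        using nonsplit_other_line_eps_neg[OF assms(9)] on_wall alpha_pos by blast
      with \<beta> show ?thesis using chamber_eps_neg_of_closure[OF assms(6,7)] by blast
    qed
  qed
  ultimately show ?thesis using unstable_Dp by blast
qed

end
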